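(* Let $n \ge 2$ and $\Sigma = \{1, 2, \dots, n\}$. Define the word $w \in \Sigma^{2n}$ by $w[1]w[2]w[3] = 1\,2\,1$; for each $x \in \{2, 3, \dots, n-1\}$, $w[2x] = x+1$ and $w[2x+1] = x$; and $w[2n] = n$. Then $TG(w)$ is a temporal path graph, i.e. its underlying graph is a path on the $n$ vertices $v_1, \dots, v_n$.
   Context: $w[i]$ denotes the $i$-th letter of $w$, $w[i,j]$ the factor $w[i]\cdots w[j]$, $\mathrm{letters}(u)$ the set of symbols of $u$, and $\pi_{\mathcal S}(w)$ the subsequence of $w$ of all occurrences of symbols in $\mathcal S$. Symbols $x,y$ alternate in $w$ if $\pi_{\{x,y\}}(w) \in \{(xy)^k, (xy)^kx, (yx)^k, (yx)^ky : k \ge 0\}$. $G(w)$ has vertex set $\{v_1,\dots,v_n\}$ and undirected edge $(v_x,v_y)$ iff $x\neq y$ alternate in $w$. Start points: $S_1=1$, and $S_i$ is the least index $j>S_{i-1}$ with $w[j] \in \mathrm{letters}(w[S_{i-1},j-1])$; $S_1<\dots<S_T$ are all start points. The $t$-th timestep factor is $w[S_t,S_{t+1}-1]$ ($t<T$) or $w[S_T,|w|]$ ($t=T$). $TG(w)=(V,E_1,\dots,E_T)$ with $E_t$ the set of edges $(v_x,v_y)$ of $G(w)$ with $x$ or $y$ occurring in the $t$-th timestep factor; its underlying graph is $(V,\bigcup_t E_t)$. *)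

theory Defs
  imports Main
begin

text \<open>Words are lists of natural numbers (symbols); positions are 1-based as in
the paper: w[i] is \<open>w ! (i - 1)\<close>. Vertex v_x is identified with the symbol x,
and an undirected edge (v_x, v_y) with the two-element set {x, y}.\<close>

definition sym_at :: "nat list \<Rightarrow> nat \<Rightarrow> nat" where
  "sym_at w i = w ! (i - 1)"

definition factor :: "nat list \<Rightarrow> nat \<Rightarrow> nat \<Rightarrow> nat list" where
  "factor w i j = map (sym_at w) [i..<Suc j]"

definition letters :: "nat list \<Rightarrow> nat set" where
  "letters u = set u"

definition proj :: "nat set \<Rightarrow> nat list \<Rightarrow> nat list" where
  "proj S w = filter (\<lambda>c. c \<in> S) w"

definition alternate :: "nat list \<Rightarrow> nat \<Rightarrow> nat \<Rightarrow> bool" where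
  "alternate w x y \<longleftrightarrow> (\<exists>k. proj {x, y} w \<in>
     {concat (replicate k [x, y]), concat (replicate k [x, y]) @ [x],
      concat (replicate k [y, x]), concat (replicate k [y, x]) @ [y]})"

definition G_edges :: "nat \<Rightarrow> nat list \<Rightarrow> nat set set" where
  "G_edges n w = {{x, y} | x y. x \<in> {1..n} \<and> y \<in> {1..n} \<and> x \<noteq> y \<and> alternate w x y}"

definition is_next_start :: "nat list \<Rightarrow> nat \<Rightarrow> nat \<Rightarrow> bool" where
  "is_next_start w s j \<longleftrightarrow> s < j \<and> j \<le> length w \<and>
     sym_at w j \<in> letters (factor w s (j - 1)) \<and>
     (\<forall>j'. s < j' \<and> j' < j \<longrightarrow> sym_at w j' \<notin> letters (factor w s (j' - 1)))"

inductive_set start_points :: "nat list \<Rightarrow> nat set" for w where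
  init: "1 \<le> length w \<Longrightarrow> 1 \<in> start_points w"
| step: "s \<in> start_points w \<Longrightarrow> is_next_start w s j \<Longrightarrow> j \<in> start_points w"

definition ts_end :: "nat list \<Rightarrow> nat \<Rightarrow> nat" where
  "ts_end w s = (if \<exists>j. is_next_start w s j then (THE j. is_next_start w s j) - 1 else length w)"

definition ts_factor :: "nat list \<Rightarrow> nat \<Rightarrow> nat list" where
  "ts_factor w s = factor w s (ts_end w s)"

definition TG_edges :: "nat \<Rightarrow> nat list \<Rightarrow> nat \<Rightarrow> nat set set" where
  "TG_edges n w s = {e \<in> G_edges n w. \<exists>x \<in> e. x \<in> letters (ts_factor w s)}"

definition TG :: "nat \<Rightarrow> nat list \<Rightarrow> nat set set list" where
  "TG n w = map (TG_edges n w) (sorted_list_of_set (start_points w))"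

definition underlying_edges :: "nat \<Rightarrow> nat list \<Rightarrow> nat set set" where
  "underlying_edges n w = \<Union> (set (TG n w))"

definition is_path_graph :: "'a set \<Rightarrow> 'a set set \<Rightarrow> bool" where
  "is_path_graph V E \<longleftrightarrow> finite V \<and>
     (\<exists>f. bij_betw f {1..card V} V \<and> E = {{f i, f (Suc i)} | i. 1 \<le> i \<and> i < card V})"

definition temporal_path_graph :: "nat \<Rightarrow> nat list \<Rightarrow> bool" where
  "temporal_path_graph n w \<longleftrightarrow> is_path_graph {1..n} (underlying_edges n w)"

end

theory Submission
  imports Defs
begin

(* The timestep factors tile w, so every symbol of w lies in some timestep factor and the
   underlying graph of TG(w) is G(w) itself.  The word is 1 (2 1) (3 2) ... (n n-1) n: every
   symbol occurs exactly twice, the two occurrences of x interleave with those of x + 1 and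
   precede both occurrences of every y \<ge> x + 2.  Hence x and y alternate iff they are
   consecutive, and G(w) is the path 1 - 2 - ... - n. *)

lemma is_next_start_unique: "is_next_start w s j \<Longrightarrow> is_next_start w s j' \<Longrightarrow> j = j'"
  unfolding is_next_start_def by (metis linorder_neqE_nat)

lemma ts_end_next: "is_next_start w s j \<Longrightarrow> ts_end w s = j - 1"
  unfolding ts_end_def using is_next_start_unique by (metis theI)

lemma start_points_bounds: "s \<in> start_points w \<Longrightarrow> 1 \<le> s \<and> s \<le> length w"
  by (induction rule: start_points.induct) (auto simp: is_next_start_def)

lemma finite_start_points: "finite (start_points w)"
  by (rule finite_subset[of _ "{1..length w}"]) (auto dest: start_points_bounds)

lemma timestep_covering:
  "s \<in> start_points w \<Longrightarrow> s \<le> i \<Longrightarrow> i \<le> length w \<Longrightarrow>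
   \<exists>s' \<in> start_points w. s' \<le> i \<and> i \<le> ts_end w s'"
proof (induction "length w - s" arbitrary: s rule: less_induct)
  case less
  show ?case
  proof (cases "\<exists>j. is_next_start w s j")
    case True
    then obtain j where j: "is_next_start w s j" by blast
    show ?thesis
    proof (cases "i < j")
      case True
      then show ?thesis using less.prems ts_end_next[OF j] by auto
    next
      case False
      have "j \<in> start_points w" using less.prems(1) j by (rule start_points.step)
      moreover have "length w - j < length w - s" "j \<le> i"
        using j False unfolding is_next_start_def by auto
      ultimately show ?thesis using less.hyps less.prems by blast
    qed
  next
    case False
    then show ?thesis using less.prems by (auto simp: ts_end_def)
  qed
qed

lemma letter_in_some_timestep:
  assumes "x \<in> set w"
  shows "\<exists>s \<in> start_points w. x \<in> letters (ts_factor w s)"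
proof -
  obtain i where i: "i < length w" "w ! i = x" using assms by (auto simp: in_set_conv_nth)
  have "1 \<in> start_points w" using i by (intro start_points.init) simp
  then obtain s where s: "s \<in> start_points w" "s \<le> Suc i" "Suc i \<le> ts_end w s"
    using timestep_covering[of 1 w "Suc i"] i by auto
  then have "Suc i \<in> set [s..<Suc (ts_end w s)]" by (auto simp del: upt_Suc)
  then have "sym_at w (Suc i) \<in> letters (ts_factor w s)"
    unfolding ts_factor_def factor_def letters_def by (simp del: upt_Suc)
  with s i show ?thesis by (auto simp: sym_at_def)
qed

lemma underlying_edges_eq_G_edges:
  assumes "{1..n} \<subseteq> set w"
  shows "underlying_edges n w = G_edges n w"
proof -
  have "underlying_edges n w = (\<Union>s \<in> start_points w. TG_edges n w s)"
    by (simp add: underlying_edges_def TG_def finite_start_points)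
  also have "\<dots> = G_edges n w"
  proof (intro equalityI subsetI)
    fix e assume "e \<in> G_edges n w"
    then obtain x y where "e = {x, y}" "x \<in> {1..n}" unfolding G_edges_def by blast
    with assms have "x \<in> set w" by blast
    then obtain s where "s \<in> start_points w" "x \<in> letters (ts_factor w s)"
      using letter_in_some_timestep by blast
    with \<open>e = {x, y}\<close> \<open>e \<in> G_edges n w\<close>
    show "e \<in> (\<Union>s \<in> start_points w. TG_edges n w s)" by (auto simp: TG_edges_def)
  qed (auto simp: TG_edges_def)
  finally show ?thesis .
qed

lemma alternate_if_proj_xyxy: "proj {x, y} w = [x, y, x, y] \<Longrightarrow> alternate w x y"
  unfolding alternate_def by (rule exI[of _ 2]) (simp add: numeral_2_eq_2)

lemma not_alternate_if_proj_xxyy: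
  assumes "x \<noteq> y" "proj {x, y} w = [x, x, y, y]"
  shows "\<not> alternate w x y"
proof
  assume "alternate w x y"
  then obtain k where k: "[x, x, y, y] \<in>
      {concat (replicate k [x, y]), concat (replicate k [x, y]) @ [x],
       concat (replicate k [y, x]), concat (replicate k [y, x]) @ [y]}"
    using assms(2) unfolding alternate_def by auto
  have length_concat: "length (concat (replicate k [a, b])) = 2 * k" for a b :: nat
    by (induction k) auto
  from k have "k = 2"
    using length_concat[of x y] length_concat[of y x] by (auto dest!: arg_cong[where f = length])
  with k assms(1) show False by (auto simp: numeral_2_eq_2)
qed

lemma alternate_commute: "alternate w x y \<longleftrightarrow> alternate w y x"
  unfolding alternate_def by (auto simp: insert_commute)

lemma proj_eq_four_positions:
  assumes "a < b" "b < c" "c < d" "d < length u"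
    and "{i. i < length u \<and> u ! i \<in> S} = {a, b, c, d}"
  shows "proj S u = [u ! a, u ! b, u ! c, u ! d]"
proof -
  have "filter (\<lambda>i. u ! i \<in> S) [0..<length u] = [a, b, c, d]"
  proof (rule sorted_distinct_set_unique)
    have "set (filter (\<lambda>i. u ! i \<in> S) [0..<length u]) = {i. i < length u \<and> u ! i \<in> S}"
      by auto
    then show "set (filter (\<lambda>i. u ! i \<in> S) [0..<length u]) = set [a, b, c, d]"
      using assms(5) by simp
  qed (use assms(1-3) in \<open>simp_all add: sorted_wrt_filter\<close>)
  moreover have "proj S u = map ((!) u) (filter (\<lambda>i. u ! i \<in> S) [0..<length u])"
    unfolding proj_def by (subst map_nth[symmetric]) (simp add: filter_map comp_def)
  ultimately show ?thesis by simp
qed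

lemma G_edges_eq_path_edges:
  assumes "\<And>x y. 1 \<le> x \<Longrightarrow> x < y \<Longrightarrow> y \<le> n \<Longrightarrow> alternate w x y \<longleftrightarrow> y = Suc x"
  shows "G_edges n w = {{i, Suc i} | i. 1 \<le> i \<and> i < n}"
proof (intro equalityI subsetI)
  fix e assume "e \<in> G_edges n w"
  then obtain x y where e: "e = {x, y}" "x \<in> {1..n}" "y \<in> {1..n}" "x \<noteq> y" "alternate w x y"
    unfolding G_edges_def by blast
  then consider "x < y" "alternate w x y" | "y < x" "alternate w y x"
    using alternate_commute by fastforce
  then show "e \<in> {{i, Suc i} | i. 1 \<le> i \<and> i < n}"
    by cases (use e assms in \<open>auto simp: insert_commute\<close>)
next
  fix e assume "e \<in> {{i, Suc i} | i. 1 \<le> i \<and> i < n}"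
  then obtain i where "e = {i, Suc i}" "1 \<le> i" "i < n" by blast
  then show "e \<in> G_edges n w"
    unfolding G_edges_def using assms[of i "Suc i"] by force
qed

lemma is_path_graph_consecutive: "is_path_graph {1..n} {{i, Suc i} | i. 1 \<le> i \<and> i < n}"
  unfolding is_path_graph_def by (intro conjI exI[of _ id]) auto

(* The 0-based symbol sequence 1 2 1 3 2 4 3 ... n (n-1) n of the word in question. *)
definition zigzag :: "nat \<Rightarrow> nat \<Rightarrow> nat" where
  "zigzag n i = (if i = 0 then 1 else if odd i then min (i div 2 + 2) n else i div 2)"

definition first_pos :: "nat \<Rightarrow> nat" where
  "first_pos k = (if k = 1 then 0 else 2 * k - 3)"

definition last_pos :: "nat \<Rightarrow> nat \<Rightarrow> nat" where
  "last_pos n k = (if k < n then 2 * k else 2 * n - 1)"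

lemma zigzag_even: "zigzag n (2 * m) = (if m = 0 then 1 else m)"
  unfolding zigzag_def by auto

lemma zigzag_odd: "zigzag n (2 * m + 1) = min (m + 2) n"
  unfolding zigzag_def by auto

lemma zigzag_eq_iff:
  assumes "n \<ge> 2" "1 \<le> k" "k \<le> n" "i < 2 * n"
  shows "zigzag n i = k \<longleftrightarrow> i = first_pos k \<or> i = last_pos n k"
proof (cases "even i")
  case True
  then obtain m where i: "i = 2 * m" by blast
  show ?thesis
    using assms unfolding i zigzag_even first_pos_def last_pos_def by auto presburger+
next
  case False
  then obtain m where i: "i = 2 * m + 1" using oddE by blast
  show ?thesis
    using assms unfolding i zigzag_odd first_pos_def last_pos_def by auto presburger+
qed

lemma first_last_pos_bounds:
  assumes "1 \<le> k" "k \<le> n"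
  shows "first_pos k < last_pos n k" "last_pos n k < 2 * n"
  using assms by (auto simp: first_pos_def last_pos_def)

lemma alternate_zigzag_iff:
  assumes "n \<ge> 2" "1 \<le> x" "x < y" "y \<le> n"
  shows "alternate (map (zigzag n) [0..<2 * n]) x y \<longleftrightarrow> y = Suc x"
proof -
  let ?u = "map (zigzag n) [0..<2 * n]"
  have x: "1 \<le> x" "x \<le> n" and y: "1 \<le> y" "y \<le> n" using assms by auto
  have at_pos: "?u ! first_pos k = k" "?u ! last_pos n k = k" if "1 \<le> k" "k \<le> n" for k
    using zigzag_eq_iff[OF assms(1) that] first_last_pos_bounds[OF that] by auto
  let ?P = "{first_pos x, last_pos n x, first_pos y, last_pos n y}"
  have "?u ! i \<in> {x, y} \<longleftrightarrow> i \<in> ?P" if "i < length ?u" for i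
    using that zigzag_eq_iff[OF assms(1) x, of i] zigzag_eq_iff[OF assms(1) y, of i] by simp
  moreover have "?P \<subseteq> {..<length ?u}"
    using first_last_pos_bounds[OF x] first_last_pos_bounds[OF y] by auto
  ultimately have positions: "{i. i < length ?u \<and> ?u ! i \<in> {x, y}} = ?P" by blast
  show ?thesis
  proof (cases "y = Suc x")
    case True
    then have "first_pos x < first_pos y" "first_pos y < last_pos n x" "last_pos n x < last_pos n y"
      using assms by (auto simp: first_pos_def last_pos_def)
    then have "proj {x, y} ?u =
        [?u ! first_pos x, ?u ! first_pos y, ?u ! last_pos n x, ?u ! last_pos n y]"
      by (intro proj_eq_four_positions)
        (use first_last_pos_bounds[OF y] positions in \<open>simp_all add: insert_commute\<close>)
    then have "proj {x, y} ?u = [x, y, x, y]" unfolding at_pos[OF x] at_pos[OF y] .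
    with True show ?thesis using alternate_if_proj_xyxy by simp
  next
    case False
    then have "last_pos n x < first_pos y"
      using assms by (auto simp: first_pos_def last_pos_def)
    then have "proj {x, y} ?u =
        [?u ! first_pos x, ?u ! last_pos n x, ?u ! first_pos y, ?u ! last_pos n y]"
      by (intro proj_eq_four_positions)
        (use first_last_pos_bounds[OF x] first_last_pos_bounds[OF y] positions in simp_all)
    then have "proj {x, y} ?u = [x, x, y, y]" unfolding at_pos[OF x] at_pos[OF y] .
    with False assms(3) show ?thesis using not_alternate_if_proj_xxyy[of x y ?u] by simp
  qed
qed

lemma set_zigzag:
  assumes "n \<ge> 2"
  shows "{1..n} \<subseteq> set (map (zigzag n) [0..<2 * n])"
proof
  fix k assume "k \<in> {1..n}"
  moreover have "first_pos k < 2 * n" using \<open>k \<in> {1..n}\<close> by (auto simp: first_pos_def)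
  ultimately show "k \<in> set (map (zigzag n) [0..<2 * n])"
    using zigzag_eq_iff[OF assms, of k "first_pos k"] by force
qed

lemma word_eq_zigzag:
  assumes "n \<ge> 2"
    and "length w = 2 * n"
    and "sym_at w 1 = 1" and "sym_at w 2 = 2" and "sym_at w 3 = 1"
    and "\<forall>x \<in> {2..n - 1}. sym_at w (2 * x) = x + 1 \<and> sym_at w (2 * x + 1) = x"
    and "sym_at w (2 * n) = n"
  shows "w = map (zigzag n) [0..<2 * n]"
proof (rule nth_equalityI)
  show "length w = length (map (zigzag n) [0..<2 * n])" using assms(2) by simp
  fix i assume "i < length w"
  then have i: "i < 2 * n" using assms(2) by simp
  consider "i \<le> 2" | "i = 2 * n - 1" | x where "i = 2 * x - 1" "x \<in> {2..n - 1}"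
    | x where "i = 2 * x" "x \<in> {2..n - 1}"
  proof (cases "i \<le> 2 \<or> i = 2 * n - 1")
    case False
    show thesis
    proof (cases "odd i")
      case True
      then show thesis using that(3)[of "Suc i div 2"] False i by (auto elim!: oddE)
    next
      case False
      then show thesis using that(4)[of "i div 2"] \<open>\<not> (i \<le> 2 \<or> i = 2 * n - 1)\<close> i
        by (auto elim!: evenE)
    qed
  qed auto
  then have "sym_at w (Suc i) = zigzag n i"
  proof cases
    case 1
    then show ?thesis
      using assms(1,3-5) by (auto simp: zigzag_def le_Suc_eq numeral_2_eq_2 numeral_3_eq_3)
  next
    case 2
    then show ?thesis using assms(1,7) by (auto simp: zigzag_def)
  next
    case (3 x)
    then show ?thesis using assms(6) by (auto simp: zigzag_def)
  next
    case (4 x)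
    then show ?thesis using assms(6) by (auto simp: zigzag_def)
  qed
  then show "w ! i = map (zigzag n) [0..<2 * n] ! i" using i by (simp add: sym_at_def)
qed

theorem lemma13:
  fixes n :: nat and w :: "nat list"
  assumes "n \<ge> 2"
    and "length w = 2 * n"
    and "sym_at w 1 = 1" and "sym_at w 2 = 2" and "sym_at w 3 = 1"
    and "\<forall>x \<in> {2..n - 1}. sym_at w (2 * x) = x + 1 \<and> sym_at w (2 * x + 1) = x"
    and "sym_at w (2 * n) = n"
  shows "temporal_path_graph n w"
proof -
  have w: "w = map (zigzag n) [0..<2 * n]" by (rule word_eq_zigzag[OF assms])
  have "underlying_edges n w = G_edges n w"
    using underlying_edges_eq_G_edges set_zigzag[OF assms(1)] w by simp
  also have "\<dots> = {{i, Suc i} | i. 1 \<le> i \<and> i < n}"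
    using G_edges_eq_path_edges alternate_zigzag_iff[OF assms(1)] w by simp
  finally show ?thesis
    unfolding temporal_path_graph_def using is_path_graph_consecutive by simp
qed

end
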